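(* Let $\varepsilon\in(0,\frac12)$ and $a\ge1$, and let $G$ be a graph. Assume that for every induced subgraph $F$ of $G$ with $|F|\ge\varepsilon^{2a}|G|$, there exists $k\in[2,1/\varepsilon]$ such that there is a complete or anticomplete $(k,|F|/k^a)$-blockade in $F$. Then $G$ has an $\varepsilon$-restricted induced subgraph with at least $\varepsilon^{3a}|G|$ vertices.
   Context: Graphs are finite and simple; $|G|$ is the number of vertices of $G$ and $\overline G$ its complement. $G$ is $\varepsilon$-sparse if its maximum degree is at most $\varepsilon|G|$, and $\varepsilon$-restricted if one of $G,\overline G$ is $\varepsilon$-sparse. A blockade in $G$ is a sequence $(B_1,\ldots,B_m)$ of disjoint subsets of $V(G)$, with length $m$ and width $\min_i|B_i|$; a $(k,w)$-blockade has length at least $k$ and width at least $w$. A blockade is complete (resp. anticomplete) if between any two distinct blocks all (resp. no) edges are present. *)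

theory Defs
  imports Complex_Main
begin

text \<open>A finite simple graph is given by a finite vertex set V and a symmetric,
irreflexive adjacency relation E. Induced subgraphs are given by vertex subsets S of V.\<close>

definition graph :: "'a set \<Rightarrow> ('a \<Rightarrow> 'a \<Rightarrow> bool) \<Rightarrow> bool" where
  "graph V E \<longleftrightarrow> finite V \<and> (\<forall>x y. E x y \<longrightarrow> E y x) \<and> (\<forall>x. \<not> E x x)"

definition sparse :: "real \<Rightarrow> 'a set \<Rightarrow> ('a \<Rightarrow> 'a \<Rightarrow> bool) \<Rightarrow> bool" where
  "sparse eps S E \<longleftrightarrow> (\<forall>v\<in>S. real (card {u\<in>S. E v u}) \<le> eps * real (card S))"

definition compl_rel :: "('a \<Rightarrow> 'a \<Rightarrow> bool) \<Rightarrow> 'a \<Rightarrow> 'a \<Rightarrow> bool" where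
  "compl_rel E x y \<longleftrightarrow> x \<noteq> y \<and> \<not> E x y"

definition restricted :: "real \<Rightarrow> 'a set \<Rightarrow> ('a \<Rightarrow> 'a \<Rightarrow> bool) \<Rightarrow> bool" where
  "restricted eps S E \<longleftrightarrow> sparse eps S E \<or> sparse eps S (compl_rel E)"

definition blockade :: "'a set \<Rightarrow> nat \<Rightarrow> (nat \<Rightarrow> 'a set) \<Rightarrow> bool" where
  "blockade S m B \<longleftrightarrow> (\<forall>i<m. B i \<subseteq> S) \<and> (\<forall>i<m. \<forall>j<m. i \<noteq> j \<longrightarrow> B i \<inter> B j = {})"

definition kw_blockade :: "'a set \<Rightarrow> nat \<Rightarrow> real \<Rightarrow> nat \<Rightarrow> (nat \<Rightarrow> 'a set) \<Rightarrow> bool" where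
  "kw_blockade S k w m B \<longleftrightarrow> blockade S m B \<and> k \<le> m \<and> (\<forall>i<m. w \<le> real (card (B i)))"

definition complete_blockade :: "('a \<Rightarrow> 'a \<Rightarrow> bool) \<Rightarrow> nat \<Rightarrow> (nat \<Rightarrow> 'a set) \<Rightarrow> bool" where
  "complete_blockade E m B \<longleftrightarrow>
     (\<forall>i<m. \<forall>j<m. i \<noteq> j \<longrightarrow> (\<forall>x\<in>B i. \<forall>y\<in>B j. E x y))"

definition anticomplete_blockade :: "('a \<Rightarrow> 'a \<Rightarrow> bool) \<Rightarrow> nat \<Rightarrow> (nat \<Rightarrow> 'a set) \<Rightarrow> bool" where
  "anticomplete_blockade E m B \<longleftrightarrow>
     (\<forall>i<m. \<forall>j<m. i \<noteq> j \<longrightarrow> (\<forall>x\<in>B i. \<forall>y\<in>B j. \<not> E x y))"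

end

theory Submission
  imports Defs
begin

text \<open>Put \<open>T = \<epsilon>\<^sup>2\<^sup>a |G|\<close> and \<open>m = \<lceil>\<epsilon>\<^sup>3\<^sup>a |G|\<rceil>\<close>. By induction on \<open>|F|\<close>, every \<open>F\<close> with at
  least \<open>m\<close> vertices contains a family \<open>\<A>\<close> of disjoint, pairwise anticomplete \<open>m\<close>-sets and a
  family \<open>\<C>\<close> of disjoint, pairwise complete \<open>m\<close>-sets with \<open>|\<A>| |\<C>| \<ge> (|F|/T)\<^sup>1\<^sup>/\<^sup>a\<close>.
  If \<open>|F| \<ge> T\<close>, the hypothesis gives a homogeneous blockade whose \<open>k\<close> blocks have at least
  \<open>|F|/k\<^sup>a \<ge> m\<close> vertices each; the families found in the blocks lose a factor \<open>k\<close>, which is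
  regained by uniting the families of the blockade's own kind and keeping a largest family of
  the other kind. For \<open>F = G\<close> the product is at least \<open>\<epsilon>\<^sup>-\<^sup>2\<close>, so one family has at least
  \<open>1/\<epsilon>\<close> members. In its union every vertex has all its neighbours (respectively
  non-neighbours) inside its own \<open>m\<close>-set, so the union is \<open>\<epsilon>\<close>-restricted, and it has at least
  \<open>m\<close> vertices.\<close>

definition complete_family :: "('a \<Rightarrow> 'a \<Rightarrow> bool) \<Rightarrow> nat \<Rightarrow> 'a set \<Rightarrow> 'a set set \<Rightarrow> bool" where
  "complete_family R m F \<A> \<longleftrightarrow> finite \<A> \<and> (\<forall>A\<in>\<A>. A \<subseteq> F \<and> card A = m) \<and>
     pairwise (\<lambda>A A'. disjnt A A' \<and> (\<forall>x\<in>A. \<forall>y\<in>A'. R x y)) \<A>"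

lemma complete_familyI:
  assumes "finite \<A>" and "\<And>A. A \<in> \<A> \<Longrightarrow> A \<subseteq> F" and "\<And>A. A \<in> \<A> \<Longrightarrow> card A = m"
    and "\<And>A A'. A \<in> \<A> \<Longrightarrow> A' \<in> \<A> \<Longrightarrow> A \<noteq> A' \<Longrightarrow> disjnt A A'"
    and "\<And>A A' x y. A \<in> \<A> \<Longrightarrow> A' \<in> \<A> \<Longrightarrow> A \<noteq> A' \<Longrightarrow> x \<in> A \<Longrightarrow> y \<in> A' \<Longrightarrow> R x y"
  shows "complete_family R m F \<A>"
  using assms unfolding complete_family_def pairwise_def by simp

lemma complete_familyD:
  assumes "complete_family R m F \<A>"
  shows "finite \<A>" and "A \<in> \<A> \<Longrightarrow> A \<subseteq> F" and "A \<in> \<A> \<Longrightarrow> card A = m"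
    and "A \<in> \<A> \<Longrightarrow> A' \<in> \<A> \<Longrightarrow> A \<noteq> A' \<Longrightarrow> disjnt A A'"
    and "A \<in> \<A> \<Longrightarrow> A' \<in> \<A> \<Longrightarrow> A \<noteq> A' \<Longrightarrow> x \<in> A \<Longrightarrow> y \<in> A' \<Longrightarrow> R x y"
  using assms unfolding complete_family_def pairwise_def by simp_all

lemma complete_family_mono:
  "complete_family R m F \<A> \<Longrightarrow> F \<subseteq> F' \<Longrightarrow> complete_family R m F' \<A>"
  unfolding complete_family_def by blast

lemma complete_family_singleton:
  "A \<subseteq> F \<Longrightarrow> card A = m \<Longrightarrow> complete_family R m F {A}"
  by (rule complete_familyI) auto

lemma card_Union_complete_family:
  assumes fam: "complete_family R m F \<A>" and "finite F"
  shows "card (\<Union>\<A>) = card \<A> * m"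
proof -
  have "pairwise disjnt \<A>"
    using complete_familyD(4)[OF fam] unfolding pairwise_def by blast
  moreover have "finite A" if "A \<in> \<A>" for A
    using complete_familyD(2)[OF fam that] \<open>finite F\<close> by (rule finite_subset)
  ultimately have "card (\<Union>\<A>) = sum card \<A>"
    by (rule card_Union_disjoint)
  also have "\<dots> = card \<A> * m"
    using complete_familyD(3)[OF fam] by simp
  finally show ?thesis .
qed

lemma sparse_Union_complete_family:
  assumes fam: "complete_family R m F \<A>" and "finite F"
    and disj: "\<And>x y. R x y \<Longrightarrow> \<not> Q x y"
    and "0 < eps" and many: "1 / eps \<le> real (card \<A>)"
  shows "sparse eps (\<Union>\<A>) Q"
  unfolding sparse_def
proof
  fix v assume "v \<in> \<Union>\<A>"
  then obtain A where A: "A \<in> \<A>" "v \<in> A" by blast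
  have "{u \<in> \<Union>\<A>. Q v u} \<subseteq> A"
  proof
    fix u assume u: "u \<in> {u \<in> \<Union>\<A>. Q v u}"
    then obtain A' where "A' \<in> \<A>" "u \<in> A'" by blast
    show "u \<in> A"
    proof (rule ccontr)
      assume "u \<notin> A"
      with \<open>u \<in> A'\<close> have "A \<noteq> A'" by blast
      then have "R v u"
        using complete_familyD(5)[OF fam A(1) \<open>A' \<in> \<A>\<close>] A(2) \<open>u \<in> A'\<close> by blast
      with u show False
        using disj by blast
    qed
  qed
  moreover have "finite A"
    using complete_familyD(2)[OF fam A(1)] \<open>finite F\<close> by (rule finite_subset)
  ultimately have "card {u \<in> \<Union>\<A>. Q v u} \<le> m"
    using card_mono complete_familyD(3)[OF fam A(1)] by metis
  moreover have "1 \<le> eps * real (card \<A>)"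
    using many \<open>0 < eps\<close> by (simp add: field_simps)
  then have "real m \<le> eps * real (card \<A>) * real m"
    using mult_right_mono[of 1 "eps * real (card \<A>)" "real m"] by simp
  ultimately show "real (card {u \<in> \<Union>\<A>. Q v u}) \<le> eps * real (card (\<Union>\<A>))"
    using card_Union_complete_family[OF fam \<open>finite F\<close>] by simp
qed

lemma subsets_of_distinct_blocks:
  assumes "blockade F l B" and "complete_blockade R l B" and "i < l" and "j < l" and "i \<noteq> j"
    and "A \<subseteq> B i" and "A' \<subseteq> B j"
  shows "disjnt A A'" and "x \<in> A \<Longrightarrow> y \<in> A' \<Longrightarrow> R x y"
proof -
  have "B i \<inter> B j = {}"
    using assms(1,3-5) unfolding blockade_def by simp
  then show "disjnt A A'"
    using assms(6,7) unfolding disjnt_def by blast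
  have "\<forall>x\<in>B i. \<forall>y\<in>B j. R x y"
    using assms(2-5) unfolding complete_blockade_def by simp
  then show "x \<in> A \<Longrightarrow> y \<in> A' \<Longrightarrow> R x y"
    using assms(6,7) by blast
qed

lemma complete_family_UN_blocks:
  assumes blk: "blockade F l B" and cb: "complete_blockade R l B"
    and fams: "\<And>j. j < l \<Longrightarrow> complete_family R m (B j) (\<A> j)"
  shows "complete_family R m F (\<Union>j<l. \<A> j)"
proof (rule complete_familyI)
  show "finite (\<Union>j<l. \<A> j)"
    using complete_familyD(1)[OF fams] by blast
next
  fix A assume "A \<in> (\<Union>j<l. \<A> j)"
  then obtain j where "j < l" "A \<in> \<A> j" by blast
  then show "A \<subseteq> F" "card A = m"
    using blk complete_familyD(2,3)[OF fams] unfolding blockade_def by blast+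
next
  fix A A' assume "A \<in> (\<Union>j<l. \<A> j)" "A' \<in> (\<Union>j<l. \<A> j)" "A \<noteq> A'"
  then obtain i j where ij: "i < l" "j < l" "A \<in> \<A> i" "A' \<in> \<A> j"
    by blast
  have "A \<subseteq> B i" "A' \<subseteq> B j"
    using complete_familyD(2)[OF fams] ij by blast+
  note distinct = subsets_of_distinct_blocks[OF blk cb \<open>i < l\<close> \<open>j < l\<close> _ this]
  show "disjnt A A'"
    using complete_familyD(4)[OF fams] distinct(1) ij \<open>A \<noteq> A'\<close> by (cases "i = j") blast+
  fix x y assume "x \<in> A" "y \<in> A'"
  then show "R x y"
    using complete_familyD(5)[OF fams] distinct(2) ij \<open>A \<noteq> A'\<close> by (cases "i = j") blast+
qed

lemma card_UN_complete_families_blocks: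
  assumes blk: "blockade F l B" and "0 < m"
    and fams: "\<And>j. j < l \<Longrightarrow> complete_family R m (B j) (\<A> j)"
  shows "card (\<Union>j<l. \<A> j) = (\<Sum>j<l. card (\<A> j))"
proof (rule card_UN_disjoint)
  show "\<forall>i\<in>{..<l}. \<forall>j\<in>{..<l}. i \<noteq> j \<longrightarrow> \<A> i \<inter> \<A> j = {}"
  proof (intro ballI impI)
    fix i j assume "i \<in> {..<l}" "j \<in> {..<l}" "i \<noteq> j"
    have "A = {}" if "A \<in> \<A> i" "A \<in> \<A> j" for A
      using complete_familyD(2)[OF fams that(1)] complete_familyD(2)[OF fams that(2)]
        blk \<open>i \<in> {..<l}\<close> \<open>j \<in> {..<l}\<close> \<open>i \<noteq> j\<close> unfolding blockade_def by blast
    then show "\<A> i \<inter> \<A> j = {}"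
      using complete_familyD(3)[OF fams] \<open>i \<in> {..<l}\<close> \<open>0 < m\<close> by fastforce
  qed
qed (use complete_familyD(1)[OF fams] in auto)

text \<open>Merging along an \<open>R\<close>-complete blockade: the \<open>R\<close>-families of the blocks are united,
  while of the \<open>R'\<close>-families only a largest one is kept.\<close>
lemma complete_families_blockade_product:
  assumes blk: "blockade F l B" and cb: "complete_blockade R l B" and "0 < m" and "0 < l"
    and fam\<A>: "\<And>j. j < l \<Longrightarrow> complete_family R m (B j) (\<A> j)"
    and fam\<C>: "\<And>j. j < l \<Longrightarrow> complete_family R' m (B j) (\<C> j)"
    and prod: "\<And>j. j < l \<Longrightarrow> p / real l \<le> real (card (\<A> j)) * real (card (\<C> j))"
  shows "\<exists>\<A>' \<C>'. complete_family R m F \<A>' \<and> complete_family R' m F \<C>' \<and>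
    p \<le> real (card \<A>') * real (card \<C>')"
proof -
  obtain j0 where j0: "j0 < l" "card (\<C> j0) = (MAX j\<in>{..<l}. card (\<C> j))"
    using Max_in[of "(\<lambda>j. card (\<C> j)) ` {..<l}"] \<open>0 < l\<close> by fastforce
  have largest: "card (\<C> j) \<le> card (\<C> j0)" if "j < l" for j
    unfolding j0(2) using that by (intro Max_ge) auto
  have "p = (\<Sum>j<l. p / real l)"
    using \<open>0 < l\<close> by simp
  also have "\<dots> \<le> (\<Sum>j<l. real (card (\<A> j)) * real (card (\<C> j0)))"
  proof (rule sum_mono)
    fix j assume "j \<in> {..<l}"
    then have "p / real l \<le> real (card (\<A> j)) * real (card (\<C> j))"
      using prod by simp
    also have "\<dots> \<le> real (card (\<A> j)) * real (card (\<C> j0))"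
      using largest \<open>j \<in> {..<l}\<close> by (simp add: mult_left_mono)
    finally show "p / real l \<le> real (card (\<A> j)) * real (card (\<C> j0))" .
  qed
  also have "\<dots> = real (card (\<Union>j<l. \<A> j)) * real (card (\<C> j0))"
    using card_UN_complete_families_blocks[OF blk \<open>0 < m\<close> fam\<A>] by (simp add: sum_distrib_right)
  finally have "p \<le> real (card (\<Union>j<l. \<A> j)) * real (card (\<C> j0))" .
  moreover have "complete_family R' m F (\<C> j0)"
    using fam\<C>[OF \<open>j0 < l\<close>] blk \<open>j0 < l\<close> unfolding blockade_def by (blast intro: complete_family_mono)
  ultimately show ?thesis
    using complete_family_UN_blocks[OF blk cb fam\<A>] by blast
qed

lemma complete_families_singleton:
  assumes "m \<le> card F" and "p \<le> 1"
  shows "\<exists>\<A> \<C>. complete_family R m F \<A> \<and> complete_family R' m F \<C> \<and>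
    p \<le> real (card \<A>) * real (card \<C>)"
proof -
  obtain A where "A \<subseteq> F" "card A = m"
    using \<open>m \<le> card F\<close> obtain_subset_with_card_n by metis
  then show ?thesis
    using complete_family_singleton \<open>p \<le> 1\<close> by fastforce
qed

lemma families_from_homogeneous_blockade:
  assumes blk: "blockade F l B" and cb: "complete_blockade E l B \<or> anticomplete_blockade E l B"
    and "0 < m" and "0 < l"
    and per_block: "\<forall>j<l. \<exists>\<A> \<C>. complete_family (\<lambda>x y. \<not> E x y) m (B j) \<A> \<and>
      complete_family E m (B j) \<C> \<and> p / real l \<le> real (card \<A>) * real (card \<C>)"
  shows "\<exists>\<A> \<C>. complete_family (\<lambda>x y. \<not> E x y) m F \<A> \<and> complete_family E m F \<C> \<and>
    p \<le> real (card \<A>) * real (card \<C>)"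
proof -
  have "\<forall>j\<in>{..<l}. \<exists>\<A> \<C>. complete_family (\<lambda>x y. \<not> E x y) m (B j) \<A> \<and>
      complete_family E m (B j) \<C> \<and> p / real l \<le> real (card \<A>) * real (card \<C>)"
    using per_block by simp
  from bchoice[OF this] obtain \<A> where "\<forall>j\<in>{..<l}. \<exists>\<C>.
      complete_family (\<lambda>x y. \<not> E x y) m (B j) (\<A> j) \<and>
      complete_family E m (B j) \<C> \<and> p / real l \<le> real (card (\<A> j)) * real (card \<C>)"
    by blast
  from bchoice[OF this] obtain \<C> where fams: "\<forall>j\<in>{..<l}.
      complete_family (\<lambda>x y. \<not> E x y) m (B j) (\<A> j) \<and>
      complete_family E m (B j) (\<C> j) \<and> p / real l \<le> real (card (\<A> j)) * real (card (\<C> j))"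
    by blast
  have fam\<A>: "\<And>j. j < l \<Longrightarrow> complete_family (\<lambda>x y. \<not> E x y) m (B j) (\<A> j)"
    and fam\<C>: "\<And>j. j < l \<Longrightarrow> complete_family E m (B j) (\<C> j)"
    and prod: "\<And>j. j < l \<Longrightarrow> p / real l \<le> real (card (\<A> j)) * real (card (\<C> j))"
    using fams by simp_all
  from cb show ?thesis
  proof
    assume "complete_blockade E l B"
    moreover have "\<And>j. j < l \<Longrightarrow> p / real l \<le> real (card (\<C> j)) * real (card (\<A> j))"
      using prod by (simp add: mult.commute)
    ultimately obtain \<C>' \<A>' where "complete_family E m F \<C>'"
      and "complete_family (\<lambda>x y. \<not> E x y) m F \<A>'"
      and "p \<le> real (card \<C>') * real (card \<A>')"
      using complete_families_blockade_product[OF blk _ \<open>0 < m\<close> \<open>0 < l\<close> fam\<C> fam\<A>] by blast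
    then show ?thesis
      by (auto simp: mult.commute)
  next
    assume "anticomplete_blockade E l B"
    then have "complete_blockade (\<lambda>x y. \<not> E x y) l B"
      unfolding anticomplete_blockade_def complete_blockade_def .
    then show ?thesis
      using complete_families_blockade_product[OF blk _ \<open>0 < m\<close> \<open>0 < l\<close> fam\<A> fam\<C> prod] by blast
  qed
qed

lemma card_block_less:
  assumes blk: "blockade F l B" and "finite F" and "2 \<le> l"
    and nonempty: "\<And>i. i < l \<Longrightarrow> B i \<noteq> {}" and "j < l"
  shows "card (B j) < card F"
proof (rule psubset_card_mono[OF \<open>finite F\<close>])
  define i :: nat where "i = (if j = 0 then 1 else 0)"
  have "i < l" and "i \<noteq> j"
    using \<open>2 \<le> l\<close> unfolding i_def by auto
  then have "B j \<subseteq> F" and "B i \<subseteq> F" and "B j \<inter> B i = {}"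
    using blk \<open>j < l\<close> unfolding blockade_def by auto
  then show "B j \<subset> F"
    using nonempty[OF \<open>i < l\<close>] by blast
qed

lemma threshold_le_block_size:
  fixes T x y k eps a :: real
  assumes "T \<le> x" and "x / k powr a \<le> y" and "0 < k" and "k \<le> 1 / eps" and "0 \<le> a" and "0 < T"
  shows "T * eps powr a \<le> y"
proof -
  have "0 < eps"
    using \<open>0 < k\<close> \<open>k \<le> 1 / eps\<close> by (metis order_less_le_trans zero_less_divide_1_iff)
  have "k powr a \<le> (1 / eps) powr a"
    using assms(3-5) by (intro powr_mono2) auto
  then have "T * eps powr a \<le> T / k powr a"
    using \<open>0 < T\<close> \<open>0 < eps\<close> \<open>0 < k\<close> by (simp add: powr_divide field_simps)
  also have "\<dots> \<le> x / k powr a"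
    using \<open>T \<le> x\<close> by (simp add: divide_right_mono)
  finally show ?thesis
    using \<open>x / k powr a \<le> y\<close> by linarith
qed

lemma root_share_le_block_size:
  fixes T x y k l a :: real
  assumes "x / k powr a \<le> y" and "0 < k" and "k \<le> l" and "0 < a" and "0 < T" and "0 \<le> x"
  shows "(x / T) powr (1/a) / l \<le> (y / T) powr (1/a)"
proof -
  have "(x / T) powr (1/a) / l \<le> (x / T) powr (1/a) / k"
    using assms(2,3) by (intro divide_left_mono) auto
  also have "\<dots> = (x / T / k powr a) powr (1/a)"
  proof -
    have "(k powr a) powr (1/a) = k"
      using assms(2,4) by (simp add: powr_powr)
    then show ?thesis
      by (simp only: powr_divide)
  qed
  also have "\<dots> \<le> (y / T) powr (1/a)"
  proof (rule powr_mono2)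
    have "x / T / k powr a = x / k powr a / T"
      by simp
    also have "\<dots> \<le> y / T"
      using divide_right_mono[OF assms(1), of T] \<open>0 < T\<close> by simp
    finally show "x / T / k powr a \<le> y / T" .
  qed (use assms(2,4-6) in simp_all)
  finally show ?thesis .
qed

text \<open>The induction runs over all \<open>F\<close> with at least \<open>m\<close> vertices, not only over those with
  at least \<open>T\<close> vertices where the blockade hypothesis applies: below \<open>T\<close> the required
  product is at most \<open>1\<close>, so a single \<open>m\<close>-subset serves for both families.\<close>
lemma complete_and_anticomplete_families:
  fixes V :: "'a set" and E :: "'a \<Rightarrow> 'a \<Rightarrow> bool" and eps a T :: real and m :: nat
  assumes "finite V" and "0 < eps" and "1 \<le> a" and "0 < T"
    and "0 < m" and m_le: "m \<le> nat \<lceil>T * eps powr a\<rceil>"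
    and blockades: "\<forall>S. S \<subseteq> V \<and> T \<le> real (card S) \<longrightarrow>
           (\<exists>k::nat. 2 \<le> k \<and> real k \<le> 1/eps \<and>
              (\<exists>l B. kw_blockade S k (real (card S) / real k powr a) l B \<and>
                     (complete_blockade E l B \<or> anticomplete_blockade E l B)))"
  shows "F \<subseteq> V \<Longrightarrow> m \<le> card F \<Longrightarrow>
    \<exists>\<A> \<C>. complete_family (\<lambda>x y. \<not> E x y) m F \<A> \<and> complete_family E m F \<C> \<and>
      (real (card F) / T) powr (1/a) \<le> real (card \<A>) * real (card \<C>)"
proof (induction "card F" arbitrary: F rule: less_induct)
  case less
  show ?case
  proof (cases "T \<le> real (card F)")
    case False
    then have "(real (card F) / T) powr (1/a) \<le> 1"
      using \<open>1 \<le> a\<close> \<open>0 < T\<close> by (intro powr_le1) simp_all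
    then show ?thesis
      using complete_families_singleton[OF less.prems(2)] by blast
  next
    case True
    with blockades less.prems(1) obtain k l B where k: "2 \<le> k" "real k \<le> 1/eps"
      and kw: "kw_blockade F k (real (card F) / real k powr a) l B"
      and cb: "complete_blockade E l B \<or> anticomplete_blockade E l B"
      by blast
    have blk: "blockade F l B" and "k \<le> l" and "2 \<le> l" and "0 < l"
      and wide: "\<And>j. j < l \<Longrightarrow> real (card F) / real k powr a \<le> real (card (B j))"
      using kw k unfolding kw_blockade_def by auto
    have "finite F"
      using less.prems(1) \<open>finite V\<close> by (rule finite_subset)
    have large: "m \<le> card (B j)" if "j < l" for j
    proof -
      have "T * eps powr a \<le> real (card (B j))"
        using threshold_le_block_size[OF True wide[OF that]] k \<open>1 \<le> a\<close> \<open>0 < T\<close> by simp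
      then have "nat \<lceil>T * eps powr a\<rceil> \<le> card (B j)"
        by (simp only: nat_ceiling_le_eq)
      with m_le show ?thesis
        by (rule le_trans)
    qed
    have "\<exists>\<A> \<C>. complete_family (\<lambda>x y. \<not> E x y) m (B j) \<A> \<and> complete_family E m (B j) \<C> \<and>
        (real (card F) / T) powr (1/a) / real l \<le> real (card \<A>) * real (card \<C>)" if "j < l" for j
    proof -
      have "B i \<noteq> {}" if "i < l" for i
        using large[OF that] \<open>0 < m\<close> by auto
      then have "card (B j) < card F"
        using card_block_less[OF blk \<open>finite F\<close> \<open>2 \<le> l\<close> _ \<open>j < l\<close>] by blast
      moreover have "B j \<subseteq> V"
        using blk \<open>j < l\<close> less.prems(1) unfolding blockade_def by blast
      ultimately obtain \<A> \<C> where "complete_family (\<lambda>x y. \<not> E x y) m (B j) \<A>"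
        "complete_family E m (B j) \<C>"
        and "(real (card (B j)) / T) powr (1/a) \<le> real (card \<A>) * real (card \<C>)"
        using less.hyps large[OF \<open>j < l\<close>] by blast
      moreover have "(real (card F) / T) powr (1/a) / real l \<le> (real (card (B j)) / T) powr (1/a)"
        using root_share_le_block_size[OF wide[OF \<open>j < l\<close>]] k \<open>k \<le> l\<close> \<open>1 \<le> a\<close> \<open>0 < T\<close> by simp
      ultimately show ?thesis
        by (meson order.trans)
    qed
    then show ?thesis
      using families_from_homogeneous_blockade[OF blk cb \<open>0 < m\<close> \<open>0 < l\<close>] by blast
  qed
qed

lemma Union_large_complete_family:
  assumes "complete_family R m F \<A>" and "finite F" and "0 < eps" and "1 / eps \<le> real (card \<A>)"
  shows "\<Union>\<A> \<subseteq> F" and "m \<le> card (\<Union>\<A>)"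
proof -
  show "\<Union>\<A> \<subseteq> F"
    using assms(1) unfolding complete_family_def by blast
  have "0 < card \<A>"
    using assms(3,4) by (metis of_nat_0_less_iff order_less_le_trans zero_less_divide_1_iff)
  then show "m \<le> card (\<Union>\<A>)"
    using card_Union_complete_family[OF assms(1,2)] by simp
qed

lemma restricted_Union_of_complete_families:
  assumes \<A>: "complete_family (\<lambda>x y. \<not> E x y) m V \<A>" and \<C>: "complete_family E m V \<C>"
    and "finite V" and "0 < eps"
    and prod: "(1/eps) * (1/eps) \<le> real (card \<A>) * real (card \<C>)"
  obtains S where "S \<subseteq> V" and "m \<le> card S" and "restricted eps S E"
proof -
  have "1/eps \<le> real (card \<A>) \<or> 1/eps \<le> real (card \<C>)"
  proof (rule ccontr)
    assume "\<not> ?thesis"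
    then have "real (card \<A>) * real (card \<C>) < (1/eps) * (1/eps)"
      using \<open>0 < eps\<close> by (intro mult_strict_mono) auto
    with prod show False
      by simp
  qed
  then show thesis
  proof
    assume "1/eps \<le> real (card \<A>)"
    then have "\<Union>\<A> \<subseteq> V" "m \<le> card (\<Union>\<A>)" "sparse eps (\<Union>\<A>) E"
      using Union_large_complete_family[OF \<A> \<open>finite V\<close> \<open>0 < eps\<close>]
        sparse_Union_complete_family[OF \<A> \<open>finite V\<close> _ \<open>0 < eps\<close>] by blast+
    then show thesis
      using that unfolding restricted_def by blast
  next
    assume "1/eps \<le> real (card \<C>)"
    moreover have "\<And>x y. E x y \<Longrightarrow> \<not> compl_rel E x y"
      unfolding compl_rel_def by blast
    ultimately have "\<Union>\<C> \<subseteq> V" "m \<le> card (\<Union>\<C>)" "sparse eps (\<Union>\<C>) (compl_rel E)"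
      using Union_large_complete_family[OF \<C> \<open>finite V\<close> \<open>0 < eps\<close>]
        sparse_Union_complete_family[OF \<C> \<open>finite V\<close> _ \<open>0 < eps\<close>] by blast+
    then show thesis
      using that unfolding restricted_def by blast
  qed
qed

theorem theorem7p4:
  fixes V :: "'a set" and E :: "'a \<Rightarrow> 'a \<Rightarrow> bool" and eps a :: real
  assumes "graph V E"
    and "0 < eps" and "eps < 1/2" and "1 \<le> a"
    and "\<forall>S. S \<subseteq> V \<and> real (card S) \<ge> eps powr (2*a) * real (card V) \<longrightarrow>
           (\<exists>k::nat. 2 \<le> k \<and> real k \<le> 1/eps \<and>
              (\<exists>m B. kw_blockade S k (real (card S) / (real k) powr a) m B \<and>
                     (complete_blockade E m B \<or> anticomplete_blockade E m B)))"
  shows "\<exists>S. S \<subseteq> V \<and> real (card S) \<ge> eps powr (3*a) * real (card V) \<and> restricted eps S E"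
proof (cases "V = {}")
  case True
  then show ?thesis
    unfolding restricted_def sparse_def by auto
next
  case False
  have "finite V"
    using assms(1) unfolding graph_def by blast
  define T where "T = eps powr (2*a) * real (card V)"
  define m where "m = nat \<lceil>T * eps powr a\<rceil>"
  have m_eq: "T * eps powr a = eps powr (3*a) * real (card V)"
    unfolding T_def by (simp add: powr_add[symmetric])
  have "0 < T" and "0 < m"
    using False \<open>finite V\<close> \<open>0 < eps\<close> unfolding T_def m_def by (auto simp: card_gt_0_iff)
  have "m \<le> card V"
    using powr_le1[of "3*a" eps] assms(2-4) unfolding m_def m_eq by (simp add: mult_left_le_one_le)
  then obtain \<A> \<C> where "complete_family (\<lambda>x y. \<not> E x y) m V \<A>" "complete_family E m V \<C>"
    and "(real (card V) / T) powr (1/a) \<le> real (card \<A>) * real (card \<C>)"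
    using complete_and_anticomplete_families[OF \<open>finite V\<close> \<open>0 < eps\<close> \<open>1 \<le> a\<close> \<open>0 < T\<close> \<open>0 < m\<close>
        eq_refl[OF m_def] assms(5)[folded T_def] subset_refl]
    by blast
  moreover have "(real (card V) / T) powr (1/a) = (1/eps) * (1/eps)"
    using False \<open>finite V\<close> \<open>0 < eps\<close> \<open>1 \<le> a\<close>
    by (simp add: T_def powr_divide powr_powr powr_numeral power2_eq_square)
  ultimately obtain S where "S \<subseteq> V" "m \<le> card S" "restricted eps S E"
    using restricted_Union_of_complete_families \<open>finite V\<close> \<open>0 < eps\<close> by metis
  moreover have "eps powr (3*a) * real (card V) \<le> real m"
    unfolding m_def m_eq[symmetric] by (rule real_nat_ceiling_ge)
  ultimately show ?thesis
    by (meson of_nat_le_iff order.trans)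
qed

end
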